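(* For all finite sets of formulas $\Gamma,\Delta$: if $\Gamma\Vdash^{cf}\Delta$, then the sequent $\Gamma\Rightarrow\Delta$ is provable in $\mathsf{CLp}$.
   Context: Fix a countably infinite set $\mathsf{At}$ of atoms. Formulas are built from atoms and the constant $\bot$ using the binary connectives $\land,\lor,\to$. All contexts are finite sets (not multisets) of formulas; a comma denotes union; a subscript $\mathsf{At}$ indicates a finite set of atoms. An atomic sequent has the form $\Gamma_{\mathsf{At}} \Rightarrow \Delta_{\mathsf{At}}$. An atomic rule has finitely many (possibly zero) atomic sequents as premises and one atomic sequent as conclusion; a rule with zero premises is an atomic axiom. A base is a (possibly empty) set of atomic rules; $\mathcal{C}\supseteq\mathcal{B}$ ($\mathcal{C}$ extends $\mathcal{B}$) if $\mathcal{C}$ contains every rule of $\mathcal{B}$. Derivability $\vdash_{\mathcal{B}}$ of atomic sequents is the least relation such that: (Axiom/Weakening) if an atomic axiom with conclusion $\Gamma_{\mathsf{At}}\Rightarrow\Delta_{\mathsf{At}}$ is in $\mathcal{B}$, then $\vdash_{\mathcal{B}} \Theta_{\mathsf{At}},\Gamma_{\mathsf{At}}\Rightarrow\Delta_{\mathsf{At}},\Sigma_{\mathsf{At}}$ for all sets of atoms $\Theta_{\mathsf{At}},\Sigma_{\mathsf{At}}$; (Mix) if a rule with premises $\Gamma^i_{\mathsf{At}}\Rightarrow\Delta^i_{\mathsf{At}}$ ($1\le i\le n$) and conclusion $\Gamma_{\mathsf{At}}\Rightarrow\Delta_{\mathsf{At}}$ is in $\mathcal{B}$ and $\vdash_{\mathcal{B}}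 \Theta^i_{\mathsf{At}},\Gamma^i_{\mathsf{At}}\Rightarrow\Delta^i_{\mathsf{At}},\Sigma^i_{\mathsf{At}}$ for each $i$, then $\vdash_{\mathcal{B}} \Theta^1_{\mathsf{At}},\dots,\Theta^n_{\mathsf{At}},\Gamma_{\mathsf{At}}\Rightarrow\Delta_{\mathsf{At}},\Sigma^1_{\mathsf{At}},\dots,\Sigma^n_{\mathsf{At}}$. Support $\Vdash_{\mathcal{B}}$: (At) $\Vdash_{\mathcal{B}}\Gamma_{\mathsf{At}}$ iff $\vdash_{\mathcal{B}}\ \Rightarrow\Gamma_{\mathsf{At}}$; ($\land$) $\Vdash_{\mathcal{B}} A\land B,\Gamma$ iff $\Vdash_{\mathcal{B}}A,\Gamma$ and $\Vdash_{\mathcal{B}}B,\Gamma$; ($\lor$) $\Vdash_{\mathcal{B}}A\lor B,\Gamma$ iff $\Vdash_{\mathcal{B}}A,B,\Gamma$; ($\to$) $\Vdash_{\mathcal{B}}A\to B,\Gamma$ iff $A\Vdash_{\mathcal{B}}B,\Gamma$; ($\bot$) $\Vdash_{\mathcal{B}}\bot,\Gamma$ iff $\Vdash_{\mathcal{B}}\Gamma$; (Inf) for $n\ge1$, $\{A^1,\dots,A^n\}\Vdash_{\mathcal{B}}\Delta$ iff for every $\mathcal{C}\supseteq\mathcal{B}$ and all sets of atoms $\Theta^1_{\mathsf{At}},\dots,\Theta^n_{\mathsf{At}}$, if $\Vdash_{\mathcal{C}}\Theta^i_{\mathsf{At}},A^i$ for all $i$ then $\Vdash_{\mathcal{C}}\Theta^1_{\mathsf{At}},\dots,\Theta^n_{\mathsf{At}},\Delta$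 (and $\varnothing\Vdash_{\mathcal{B}}\Delta$ means $\Vdash_{\mathcal{B}}\Delta$). The atomic identity rule $\mathsf{Ainit}$ is the atomic axiom $\Gamma_{\mathsf{At}},p\Rightarrow p,\Delta_{\mathsf{At}}$. $\mathcal{HS}$ is the base consisting of all instances of $\mathsf{Ainit}$. Cut-free validity: $\Gamma\Vdash^{cf}\Delta$ iff $\Gamma\Vdash_{\mathcal{B}}\Delta$ for every base $\mathcal{B}\supseteq\mathcal{HS}$. $\mathsf{CLp}$ is the sequent calculus on sequents $\Gamma\Rightarrow\Delta$ (finite sets of formulas) with rules: $\mathsf{init}$: $\Gamma,A\Rightarrow A,\Delta$; $L\bot$: $\Gamma,\bot\Rightarrow\Delta$; $R\bot$: from $\Gamma\Rightarrow\Delta$ infer $\Gamma\Rightarrow\bot,\Delta$; $L\land$: from $A,B,\Gamma\Rightarrow\Delta$ infer $A\land B,\Gamma\Rightarrow\Delta$; $R\land$: from $\Gamma\Rightarrow\Delta,A$ and $\Gamma'\Rightarrow\Delta',B$ infer $\Gamma,\Gamma'\Rightarrow\Delta,\Delta',A\land B$; $L\lor$: from $A,\Gamma\Rightarrow\Delta$ and $B,\Gamma'\Rightarrow\Delta'$ infer $A\lor B,\Gamma,\Gamma'\Rightarrow\Delta,\Delta'$; $R\lor$: from $\Gamma\Rightarrow\Delta,A,B$ infer $\Gamma\Rightarrow\Delta,A\lor B$; $L\to$: from $\Gamma\Rightarrow\Delta,A$ and $B,\Gamma'\Rightarrow\Delta'$ infer $A\to B,\Gamma,\Gamma'\Rightarrow\Delta,\Delta'$;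 $R\to$: from $A,\Gamma\Rightarrow\Delta,B$ infer $\Gamma\Rightarrow\Delta,A\to B$. *)

theory Defs
  imports Main
begin

datatype form = Atom nat | Bot | Conj form form | Disj form form | Imp form form

type_synonym aseq = "nat set \<times> nat set"
type_synonym arule = "aseq list \<times> aseq"

definition fin_aseq :: "aseq \<Rightarrow> bool" where
  "fin_aseq s \<longleftrightarrow> finite (fst s) \<and> finite (snd s)"

definition atomic_rule :: "arule \<Rightarrow> bool" where
  "atomic_rule r \<longleftrightarrow> (\<forall>s\<in>set (fst r). fin_aseq s) \<and> fin_aseq (snd r)"

definition base :: "arule set \<Rightarrow> bool" where
  "base B \<longleftrightarrow> (\<forall>r\<in>B. atomic_rule r)"

inductive derivable :: "arule set \<Rightarrow> aseq \<Rightarrow> bool" for B where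
  axiom_weak: "([], (G, D)) \<in> B \<Longrightarrow> finite Th \<Longrightarrow> finite Sg \<Longrightarrow>
     derivable B (Th \<union> G, D \<union> Sg)"
| mix: "(ps, (G, D)) \<in> B \<Longrightarrow> length Ths = length ps \<Longrightarrow> length Sgs = length ps \<Longrightarrow>
     (\<forall>i<length ps. finite (Ths ! i) \<and> finite (Sgs ! i) \<and>
        derivable B (Ths ! i \<union> fst (ps ! i), snd (ps ! i) \<union> Sgs ! i)) \<Longrightarrow>
     derivable B (\<Union> (set Ths) \<union> G, D \<union> \<Union> (set Sgs))"

fun wt :: "form \<Rightarrow> nat" where
  "wt (Atom p) = 0"
| "wt Bot = 1"
| "wt (Conj A B) = Suc (wt A + wt B)"
| "wt (Disj A B) = Suc (wt A + wt B)"
| "wt (Imp A B) = Suc (wt A + wt B)"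

definition cwt :: "form set \<Rightarrow> nat" where
  "cwt G = (\<Sum>A\<in>G. wt A)"

fun is_atom :: "form \<Rightarrow> bool" where
  "is_atom (Atom p) = True"
| "is_atom _ = False"

definition pick :: "form set \<Rightarrow> form" where
  "pick G = (SOME A. A \<in> G \<and> \<not> is_atom A)"

lemma pick_in:
  assumes "\<exists>A\<in>G. \<not> is_atom A"
  shows "pick G \<in> G \<and> \<not> is_atom (pick G)"
proof -
  from assms have "\<exists>A. A \<in> G \<and> \<not> is_atom A" by blast
  then have "(SOME A. A \<in> G \<and> \<not> is_atom A) \<in> G \<and> \<not> is_atom (SOME A. A \<in> G \<and> \<not> is_atom A)"
    by (rule someI_ex)
  then show ?thesis unfolding pick_def .
qed

lemma wt_pos: "\<not> is_atom A \<Longrightarrow> 0 < wt A"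
  by (cases A) auto

lemma cwt_remove:
  assumes "finite G" "A \<in> G"
  shows "cwt G = wt A + cwt (G - {A})"
  unfolding cwt_def using assms by (simp add: sum.remove)

lemma cwt_insert_le:
  assumes "finite G"
  shows "cwt (insert A G) \<le> wt A + cwt G"
  using assms unfolding cwt_def by (cases "A \<in> G") (simp_all add: insert_absorb)

lemma cwt_atoms:
  assumes "finite Th" "finite S"
  shows "cwt (Atom ` Th \<union> S) = cwt S"
proof -
  have "cwt (Atom ` Th \<union> S) = cwt (Atom ` Th - S) + cwt S"
  proof -
    have eq: "Atom ` Th \<union> S = (Atom ` Th - S) \<union> S" by blast
    have "finite (Atom ` Th - S)" using assms by simp
    moreover have "(Atom ` Th - S) \<inter> S = {}" by blast
    ultimately show ?thesis unfolding cwt_def eq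
      using assms(2) sum.union_disjoint[of "Atom ` Th - S" S wt] by simp
  qed
  moreover have "cwt (Atom ` Th - S) = 0" unfolding cwt_def by (auto intro!: sum.neutral)
  ultimately show ?thesis by simp
qed

text \<open>The support relation for a base B and a (finite) set of formulas G
  (read as a context on the right):
  (At) if G consists of atoms only, it is supported iff the atomic sequent
       with empty antecedent and succedent G is derivable in B;
  otherwise a non-atomic formula of G is decomposed according to the clauses
  (bot), (and), (or), (imp), where in (imp) the judgement  X |= Y, R  is unfolded
  by clause (Inf) with n = 1.  Contexts are sets; the formula being decomposed is
  removed from the rest of the context R.
  The recursion is well-founded on cwt (the non-atomic weight of the context);
  technically we define it with a fuel argument n and then supply fuel
  Suc (cwt G), which always suffices (every recursive call lowers cwt), cf.
  lemma supp_unfold below.\<close>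

primrec supp_fuel :: "nat \<Rightarrow> arule set \<Rightarrow> form set \<Rightarrow> bool" where
  "supp_fuel 0 B G = False"
| "supp_fuel (Suc n) B G =
    (if \<not> finite G then False
     else if \<forall>A\<in>G. is_atom A then derivable B ({}, {p. Atom p \<in> G})
     else (let A = pick G; R = G - {A} in
       (case A of
          Bot \<Rightarrow> supp_fuel n B R
        | Conj X Y \<Rightarrow> supp_fuel n B (insert X R) \<and> supp_fuel n B (insert Y R)
        | Disj X Y \<Rightarrow> supp_fuel n B (insert X (insert Y R))
        | Imp X Y \<Rightarrow>
            (\<forall>C Th. base C \<longrightarrow> B \<subseteq> C \<longrightarrow> finite Th \<longrightarrow>
               supp_fuel n C (Atom ` Th \<union> {X}) \<longrightarrow> supp_fuel n C (Atom ` Th \<union> insert Y R))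
        | Atom p \<Rightarrow> False)))"

definition supp :: "arule set \<Rightarrow> form set \<Rightarrow> bool" where
  "supp B G = supp_fuel (Suc (cwt G)) B G"

text \<open>G |=_B D.  For nonempty G = {A1,...,An}, the atom sets Theta^i are indexed
  by the formulas of G themselves (the A^i are distinct elements of a set).\<close>

definition infer :: "arule set \<Rightarrow> form set \<Rightarrow> form set \<Rightarrow> bool" where
  "infer B G D =
    (if G = {} then supp B D
     else (\<forall>C Th. base C \<longrightarrow> B \<subseteq> C \<longrightarrow>
             (\<forall>A\<in>G. finite (Th A) \<and> supp C (Atom ` Th A \<union> {A})) \<longrightarrow>
             supp C (Atom ` (\<Union>A\<in>G. Th A) \<union> D)))"

definition HS :: "arule set" where
  "HS = {([], (insert p G, insert p D)) | p G D. finite G \<and> finite D}"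

definition cf_valid :: "form set \<Rightarrow> form set \<Rightarrow> bool" where
  "cf_valid G D \<longleftrightarrow> (\<forall>B. base B \<longrightarrow> HS \<subseteq> B \<longrightarrow> infer B G D)"

text \<open>Each rule is written with
  the conclusion's contexts as variables Gc, Dc, together with equations fixing
  them (this is literally the rule as given, e.g. Gc = G,A and Dc = A,D for init).\<close>

inductive CLp :: "form set \<Rightarrow> form set \<Rightarrow> bool" where
  init: "finite G \<Longrightarrow> finite D \<Longrightarrow> Gc = insert A G \<Longrightarrow> Dc = insert A D \<Longrightarrow> CLp Gc Dc"
| LBot: "finite G \<Longrightarrow> finite D \<Longrightarrow> Gc = insert Bot G \<Longrightarrow> CLp Gc D"
| RBot: "CLp G D \<Longrightarrow> Dc = insert Bot D \<Longrightarrow> CLp G Dc"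
| LConj: "CLp (insert A (insert B G)) D \<Longrightarrow> Gc = insert (Conj A B) G \<Longrightarrow> CLp Gc D"
| RConj: "CLp G (insert A D) \<Longrightarrow> CLp G' (insert B D') \<Longrightarrow>
    Gc = G \<union> G' \<Longrightarrow> Dc = insert (Conj A B) (D \<union> D') \<Longrightarrow> CLp Gc Dc"
| LDisj: "CLp (insert A G) D \<Longrightarrow> CLp (insert B G') D' \<Longrightarrow>
    Gc = insert (Disj A B) (G \<union> G') \<Longrightarrow> Dc = D \<union> D' \<Longrightarrow> CLp Gc Dc"
| RDisj: "CLp G (insert A (insert B D)) \<Longrightarrow> Dc = insert (Disj A B) D \<Longrightarrow> CLp G Dc"
| LImp: "CLp G (insert A D) \<Longrightarrow> CLp (insert B G') D' \<Longrightarrow>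
    Gc = insert (Imp A B) (G \<union> G') \<Longrightarrow> Dc = D \<union> D' \<Longrightarrow> CLp Gc Dc"
| RImp: "CLp (insert A G) (insert B D) \<Longrightarrow> Dc = insert (Imp A B) D \<Longrightarrow> CLp G Dc"

end

theory Submission
  imports Defs
begin

text \<open>CLp is complete for classical two-valued semantics, so it suffices to show that a
  cut-free valid sequent is true under every valuation v. For this, take the base val_base v
  consisting of HS, the axioms \<open>\<Rightarrow> p\<close> for true p, \<open>p \<Rightarrow>\<close> for false p, and the atomic cuts
  \<open>\<Rightarrow> q\<close>, \<open>q \<Rightarrow>\<close> / \<open>\<Rightarrow>\<close>. Everything it derives is true under v, so it is consistent,
  and in every extension C of it a context is supported exactly if C is inconsistent or some
  formula of the context is true under v. Instantiating (Inf) at val_base v with empty atom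
  sets then turns a true antecedent into a true succedent formula.\<close>

fun holds :: "(nat \<Rightarrow> bool) \<Rightarrow> form \<Rightarrow> bool" where
  "holds v (Atom p) = v p"
| "holds v Bot = False"
| "holds v (Conj A B) = (holds v A \<and> holds v B)"
| "holds v (Disj A B) = (holds v A \<or> holds v B)"
| "holds v (Imp A B) = (holds v A \<longrightarrow> holds v B)"

definition classically_valid :: "form set \<Rightarrow> form set \<Rightarrow> bool" where
  "classically_valid G D \<longleftrightarrow> (\<forall>v. (\<forall>A\<in>G. holds v A) \<longrightarrow> (\<exists>B\<in>D. holds v B))"

lemma is_atomD: "is_atom A \<Longrightarrow> \<exists>p. A = Atom p"
  by (cases A) auto

lemma cwt_insert2_le: "finite G \<Longrightarrow> cwt (insert A (insert B G)) \<le> wt A + wt B + cwt G"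
  using cwt_insert_le[of G B] cwt_insert_le[of "insert B G" A] by simp

lemma CLp_complete_atomic:
  assumes "finite G" "finite D" "\<forall>A\<in>G. is_atom A" "\<forall>A\<in>D. is_atom A"
    and "classically_valid G D"
  shows "CLp G D"
proof (cases "\<exists>A\<in>G. A \<in> D")
  case True
  then obtain A where "A \<in> G" "A \<in> D" by blast
  then show ?thesis using assms(1,2) CLp.init[of "G - {A}" "D - {A}" G A D] by auto
next
  case False
  define v where "v p \<longleftrightarrow> Atom p \<in> G" for p
  have "\<forall>A\<in>G. holds v A" using assms(3) v_def by (auto dest!: is_atomD)
  then obtain B where "B \<in> D" "holds v B" using assms(5) unfolding classically_valid_def by blast
  then show ?thesis using assms(4) False v_def by (auto dest!: is_atomD)
qed

lemma CLp_complete_left: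
  assumes IH: "\<And>G' D'. cwt G' + cwt D' < cwt G + cwt D \<Longrightarrow> finite G' \<Longrightarrow> finite D' \<Longrightarrow>
      classically_valid G' D' \<Longrightarrow> CLp G' D'"
    and fin: "finite G" "finite D" and A: "A \<in> G" "\<not> is_atom A"
    and val: "classically_valid G D"
  shows "CLp G D"
proof -
  define R where "R = G - {A}"
  have G: "G = insert A R" and finR: "finite R" using A fin R_def by auto
  have cw: "cwt G = wt A + cwt R" using cwt_remove[OF fin(1) A(1)] R_def by simp
  show ?thesis
  proof (cases A)
    case (Atom p) then show ?thesis using A by simp
  next
    case Bot then show ?thesis using G fin finR by (auto intro: CLp.LBot)
  next
    case (Conj X Y)
    have "CLp (insert X (insert Y R)) D"
      using IH cw Conj cwt_insert2_le[OF finR, of X Y] finR fin val G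
      unfolding classically_valid_def by auto
    then show ?thesis using G Conj by (auto intro: CLp.LConj)
  next
    case (Disj X Y)
    have "CLp (insert X R) D" "CLp (insert Y R) D"
      using IH cw Disj cwt_insert_le[OF finR, of X] cwt_insert_le[OF finR, of Y] finR fin val G
      unfolding classically_valid_def by auto
    then show ?thesis using G Disj CLp.LDisj[of X R D Y R D G D] by auto
  next
    case (Imp X Y)
    have "CLp R (insert X D)"
      using IH[of R "insert X D"] cw Imp cwt_insert_le[OF fin(2), of X] finR fin val G
      unfolding classically_valid_def by auto
    moreover have "CLp (insert Y R) D"
      using IH[of "insert Y R" D] cw Imp cwt_insert_le[OF finR, of Y] finR fin val G
      unfolding classically_valid_def by auto
    ultimately show ?thesis using G Imp CLp.LImp[of R X D Y R D G D] by auto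
  qed
qed

lemma CLp_complete_right:
  assumes IH: "\<And>G' D'. cwt G' + cwt D' < cwt G + cwt D \<Longrightarrow> finite G' \<Longrightarrow> finite D' \<Longrightarrow>
      classically_valid G' D' \<Longrightarrow> CLp G' D'"
    and fin: "finite G" "finite D" and A: "A \<in> D" "\<not> is_atom A"
    and val: "classically_valid G D"
  shows "CLp G D"
proof -
  define R where "R = D - {A}"
  have D: "D = insert A R" and finR: "finite R" using A fin R_def by auto
  have cw: "cwt D = wt A + cwt R" using cwt_remove[OF fin(2) A(1)] R_def by simp
  show ?thesis
  proof (cases A)
    case (Atom p) then show ?thesis using A by simp
  next
    case Bot
    have "CLp G R"
      using IH[of G R] cw Bot finR fin val D unfolding classically_valid_def by auto
    then show ?thesis using D Bot by (auto intro: CLp.RBot)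
  next
    case (Conj X Y)
    have "CLp G (insert X R)"
      using IH[of G "insert X R"] cw Conj cwt_insert_le[OF finR, of X] finR fin val D
      unfolding classically_valid_def by auto
    moreover have "CLp G (insert Y R)"
      using IH[of G "insert Y R"] cw Conj cwt_insert_le[OF finR, of Y] finR fin val D
      unfolding classically_valid_def by auto
    ultimately show ?thesis using D Conj CLp.RConj[of G X R G Y R G D] by auto
  next
    case (Disj X Y)
    have "CLp G (insert X (insert Y R))"
      using IH cw Disj cwt_insert2_le[OF finR, of X Y] finR fin val D
      unfolding classically_valid_def by auto
    then show ?thesis using D Disj by (auto intro: CLp.RDisj)
  next
    case (Imp X Y)
    have "CLp (insert X G) (insert Y R)"
      using IH cw Imp cwt_insert_le[OF fin(1), of X] cwt_insert_le[OF finR, of Y] finR fin val D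
      unfolding classically_valid_def by auto
    then show ?thesis using D Imp by (auto intro: CLp.RImp)
  qed
qed

theorem CLp_complete:
  "finite G \<Longrightarrow> finite D \<Longrightarrow> classically_valid G D \<Longrightarrow> CLp G D"
proof (induction "cwt G + cwt D" arbitrary: G D rule: less_induct)
  case less
  consider (left) A where "A \<in> G" "\<not> is_atom A" | (right) A where "A \<in> D" "\<not> is_atom A"
    | (atomic) "\<forall>A\<in>G. is_atom A" "\<forall>A\<in>D. is_atom A"
    by blast
  then show ?case
  proof cases
    case left then show ?thesis using CLp_complete_left less by blast
  next
    case right then show ?thesis using CLp_complete_right less by blast
  next
    case atomic then show ?thesis using CLp_complete_atomic less.prems by blast
  qed
qed

definition val_base :: "(nat \<Rightarrow> bool) \<Rightarrow> arule set" where
  "val_base v = HS \<union> {([], ({}, {p})) | p. v p} \<union> {([], ({p}, {})) | p. \<not> v p}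
     \<union> {([({}, {q}), ({q}, {})], ({}, {})) | q. True}"

definition inconsistent :: "arule set \<Rightarrow> bool" where
  "inconsistent B \<longleftrightarrow> derivable B ({}, {})"

definition aseq_true :: "(nat \<Rightarrow> bool) \<Rightarrow> aseq \<Rightarrow> bool" where
  "aseq_true v s \<longleftrightarrow> (\<forall>p\<in>fst s. v p) \<longrightarrow> (\<exists>p\<in>snd s. v p)"

lemma base_val_base: "base (val_base v)"
  unfolding base_def val_base_def HS_def atomic_rule_def fin_aseq_def by auto

lemma HS_subset_val_base: "HS \<subseteq> val_base v"
  unfolding val_base_def by auto

lemma derivable_mono: "derivable B s \<Longrightarrow> B \<subseteq> C \<Longrightarrow> derivable C s"
proof (induction rule: derivable.induct)
  case (axiom_weak G D Th Sg)
  then show ?case by (auto intro: derivable.axiom_weak)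
next
  case (mix ps G D Ths Sgs)
  then show ?case by (auto intro!: derivable.mix)
qed

lemma inconsistent_mono: "inconsistent B \<Longrightarrow> B \<subseteq> C \<Longrightarrow> inconsistent C"
  unfolding inconsistent_def by (rule derivable_mono)

lemma Union_set_update_0: "xs \<noteq> [] \<Longrightarrow> \<Union> (set (xs[0 := xs ! 0 \<union> S])) = \<Union> (set xs) \<union> S"
  by (cases xs) auto

lemma derivable_weaken:
  assumes "derivable B s" "finite Th" "finite Sg"
  shows "derivable B (Th \<union> fst s, snd s \<union> Sg)"
  using assms(1)
proof (induction rule: derivable.induct)
  case (axiom_weak G D Th' Sg')
  then show ?case
    using derivable.axiom_weak[of G D B "Th \<union> Th'" "Sg' \<union> Sg"] assms(2,3) by (simp add: Un_assoc)
next
  case (mix ps G D Ths Sgs)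
  show ?case
  proof (cases "ps = []")
    case True
    then show ?thesis
      using mix.hyps derivable.axiom_weak[of G D B Th Sg] assms(2,3) by simp
  next
    case False
    \<comment> \<open>the extra atoms are added to the weakening sets of the first premise\<close>
    define Ths' where "Ths' = Ths[0 := Ths ! 0 \<union> Th]"
    define Sgs' where "Sgs' = Sgs[0 := Sgs ! 0 \<union> Sg]"
    have ne: "Ths \<noteq> []" "Sgs \<noteq> []" using False mix.hyps(2,3) by auto
    have "derivable B (\<Union> (set Ths') \<union> G, D \<union> \<Union> (set Sgs'))"
    proof (rule derivable.mix[OF mix.hyps(1)])
      show "\<forall>i<length ps. finite (Ths' ! i) \<and> finite (Sgs' ! i) \<and>
          derivable B (Ths' ! i \<union> fst (ps ! i), snd (ps ! i) \<union> Sgs' ! i)"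
      proof (intro allI impI)
        fix i assume "i < length ps"
        then show "finite (Ths' ! i) \<and> finite (Sgs' ! i) \<and>
            derivable B (Ths' ! i \<union> fst (ps ! i), snd (ps ! i) \<union> Sgs' ! i)"
          using mix.hyps(2,3) mix.IH assms(2,3) unfolding Ths'_def Sgs'_def
          by (cases "i = 0") (auto simp: Un_ac)
      qed
    qed (use mix.hyps(2,3) Ths'_def Sgs'_def in simp_all)
    then show ?thesis
      using Union_set_update_0[OF ne(1), of Th] Union_set_update_0[OF ne(2), of Sg]
      unfolding Ths'_def Sgs'_def by (simp add: ac_simps)
  qed
qed

lemma derivable_val_base_true: "derivable (val_base v) s \<Longrightarrow> aseq_true v s"
proof (induction rule: derivable.induct)
  case (axiom_weak G D Th Sg)
  then show ?case unfolding val_base_def HS_def aseq_true_def by auto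
next
  case (mix ps G D Ths Sgs)
  show ?case
  proof (cases "ps = []")
    case True
    then show ?thesis using mix unfolding val_base_def HS_def aseq_true_def by auto
  next
    case False
    then obtain q where q: "ps = [({}, {q}), ({q}, {})]" "G = {}" "D = {}"
      using mix.hyps(1) unfolding val_base_def HS_def by auto
    obtain T1 T2 where Ths: "Ths = [T1, T2]" using mix.hyps(2) q(1)
      by (cases Ths; cases "tl Ths"; auto)
    obtain S1 S2 where Sgs: "Sgs = [S1, S2]" using mix.hyps(3) q(1)
      by (cases Sgs; cases "tl Sgs"; auto)
    have "aseq_true v (T1, {q} \<union> S1)" "aseq_true v (T2 \<union> {q}, S2)"
      using mix.IH q Ths Sgs by (auto dest: spec[of _ 0] spec[of _ 1])
    then show ?thesis using q Ths Sgs unfolding aseq_true_def by (cases "v q") auto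
  qed
qed

lemma consistent_val_base: "\<not> inconsistent (val_base v)"
  using derivable_val_base_true[of v "({}, {})"] unfolding inconsistent_def aseq_true_def by auto

lemma derivable_cut_false_atom:
  assumes "val_base v \<subseteq> C" "\<not> v q" "finite S" "derivable C ({}, insert q S)"
  shows "derivable C ({}, S)"
proof -
  have cut: "([({}, {q}), ({q}, {})], ({}, {})) \<in> C" and "([], ({q}, {})) \<in> C"
    using assms(1,2) unfolding val_base_def by auto
  then have "derivable C ({q}, {})" using derivable.axiom_weak[of "{q}" "{}" C "{}" "{}"] by simp
  with assms(3,4) have "derivable C (\<Union> (set [{}, {}]) \<union> {}, {} \<union> \<Union> (set [S, {}]))"
    by (intro derivable.mix[OF cut]) (auto simp: less_Suc_eq)
  then show ?thesis by simp
qed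

lemma inconsistent_if_derivable_false_atoms:
  assumes "finite S" "val_base v \<subseteq> C"
  shows "\<forall>p\<in>S. \<not> v p \<Longrightarrow> derivable C ({}, S) \<Longrightarrow> inconsistent C"
  using assms(1)
proof (induction S rule: finite_induct)
  case empty then show ?case unfolding inconsistent_def by simp
next
  case (insert q S)
  then show ?case using derivable_cut_false_atom[OF assms(2)] by blast
qed

lemma derivable_atoms_iff:
  assumes "finite S" "val_base v \<subseteq> C"
  shows "derivable C ({}, S) \<longleftrightarrow> inconsistent C \<or> (\<exists>p\<in>S. v p)"
proof
  assume "derivable C ({}, S)"
  then show "inconsistent C \<or> (\<exists>p\<in>S. v p)"
    using inconsistent_if_derivable_false_atoms[OF assms] by blast
next
  assume "inconsistent C \<or> (\<exists>p\<in>S. v p)"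
  then show "derivable C ({}, S)"
  proof
    assume "inconsistent C"
    then show ?thesis
      using derivable_weaken[of C "({}, {})" "{}" S] assms(1) unfolding inconsistent_def by simp
  next
    assume "\<exists>p\<in>S. v p"
    then obtain p where "p \<in> S" "v p" by blast
    moreover have "([], ({}, {p})) \<in> C" using \<open>v p\<close> assms(2) unfolding val_base_def by auto
    ultimately show ?thesis
      using derivable.axiom_weak[of "{}" "{p}" C "{}" S] assms(1) by (simp add: insert_absorb)
  qed
qed

lemma supp_fuel_Suc_atoms:
  assumes "finite S"
  shows "supp_fuel (Suc n) B (Atom ` S) = derivable B ({}, S)"
proof -
  have "{p. Atom p \<in> Atom ` S} = S" by blast
  then show ?thesis using assms by simp
qed

lemma supp_fuel_Suc_pick:
  assumes "finite G" "\<not> (\<forall>A\<in>G. is_atom A)"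
  shows "supp_fuel (Suc n) B G = (case pick G of
          Bot \<Rightarrow> supp_fuel n B (G - {pick G})
        | Conj X Y \<Rightarrow> supp_fuel n B (insert X (G - {pick G})) \<and> supp_fuel n B (insert Y (G - {pick G}))
        | Disj X Y \<Rightarrow> supp_fuel n B (insert X (insert Y (G - {pick G})))
        | Imp X Y \<Rightarrow>
            (\<forall>C Th. base C \<longrightarrow> B \<subseteq> C \<longrightarrow> finite Th \<longrightarrow>
               supp_fuel n C (Atom ` Th \<union> {X}) \<longrightarrow> supp_fuel n C (Atom ` Th \<union> insert Y (G - {pick G})))
        | Atom p \<Rightarrow> False)"
  using assms by (auto simp: Let_def)

lemma forall_extensions_imp_iff:
  assumes "base C"
    and S: "\<And>C' Th. base C' \<Longrightarrow> C \<subseteq> C' \<Longrightarrow> finite Th \<Longrightarrow>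
      S C' Th \<longleftrightarrow> inconsistent C' \<or> (\<exists>p\<in>Th. v p) \<or> P"
    and T: "\<And>C' Th. base C' \<Longrightarrow> C \<subseteq> C' \<Longrightarrow> finite Th \<Longrightarrow>
      T C' Th \<longleftrightarrow> inconsistent C' \<or> (\<exists>p\<in>Th. v p) \<or> Q"
  shows "(\<forall>C' Th. base C' \<longrightarrow> C \<subseteq> C' \<longrightarrow> finite Th \<longrightarrow> S C' Th \<longrightarrow> T C' Th)
    \<longleftrightarrow> inconsistent C \<or> \<not> P \<or> Q"
proof
  assume "\<forall>C' Th. base C' \<longrightarrow> C \<subseteq> C' \<longrightarrow> finite Th \<longrightarrow> S C' Th \<longrightarrow> T C' Th"
  then have "S C {} \<Longrightarrow> T C {}" using assms(1) by simp
  then show "inconsistent C \<or> \<not> P \<or> Q" using S[of C "{}"] T[of C "{}"] assms(1) by simp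
next
  assume Q: "inconsistent C \<or> \<not> P \<or> Q"
  show "\<forall>C' Th. base C' \<longrightarrow> C \<subseteq> C' \<longrightarrow> finite Th \<longrightarrow> S C' Th \<longrightarrow> T C' Th"
  proof (intro allI impI)
    fix C' Th
    assume ext: "base C'" "C \<subseteq> C'" "finite Th" and "S C' Th"
    then have "inconsistent C' \<or> (\<exists>p\<in>Th. v p) \<or> P" using S by blast
    then show "T C' Th" using Q T[OF ext] inconsistent_mono[OF _ ext(2)] by blast
  qed
qed

lemma supp_fuel_Suc_compound_iff:
  assumes IH: "\<And>H C'. cwt H < n \<Longrightarrow> finite H \<Longrightarrow> base C' \<Longrightarrow> C \<subseteq> C' \<Longrightarrow>
      supp_fuel n C' H \<longleftrightarrow> inconsistent C' \<or> (\<exists>A\<in>H. holds v A)"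
    and bound: "cwt G < Suc n" and fin: "finite G" and base: "base C"
    and compound: "\<not> (\<forall>A\<in>G. is_atom A)"
  shows "supp_fuel (Suc n) C G \<longleftrightarrow> inconsistent C \<or> (\<exists>A\<in>G. holds v A)"
proof -
  define A where "A = pick G"
  define R where "R = G - {A}"
  have A: "A \<in> G" "\<not> is_atom A" using pick_in compound A_def by auto
  have G: "G = insert A R" and finR: "finite R" using A fin R_def by auto
  have cw: "wt A + cwt R < Suc n" using cwt_remove[OF fin A(1)] bound R_def by simp
  note unfold = supp_fuel_Suc_pick[OF fin compound, of n C, folded A_def, folded R_def]
  show ?thesis
  proof (cases A)
    case (Atom p)
    then show ?thesis using A by simp
  next
    case Bot
    have "supp_fuel (Suc n) C G \<longleftrightarrow> supp_fuel n C R" using unfold unfolding Bot form.case .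
    then show ?thesis using IH[of R C] cw G finR base Bot by auto
  next
    case (Conj X Y)
    have "supp_fuel (Suc n) C G \<longleftrightarrow> supp_fuel n C (insert X R) \<and> supp_fuel n C (insert Y R)"
      using unfold unfolding Conj form.case .
    then show ?thesis
      using IH[of "insert X R" C] IH[of "insert Y R" C] cw G finR base Conj
        cwt_insert_le[OF finR, of X] cwt_insert_le[OF finR, of Y] by auto
  next
    case (Disj X Y)
    have "supp_fuel (Suc n) C G \<longleftrightarrow> supp_fuel n C (insert X (insert Y R))"
      using unfold unfolding Disj form.case .
    then show ?thesis
      using IH[of "insert X (insert Y R)" C] cw G finR base Disj cwt_insert2_le[OF finR, of X Y]
      by auto
  next
    case (Imp X Y)
    have "cwt (Atom ` Th \<union> {X}) < n" "cwt (Atom ` Th \<union> insert Y R) < n" if "finite Th" for Th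
      using cwt_atoms[OF that, of "{X}"] cwt_atoms[OF that, of "insert Y R"]
        cwt_insert_le[OF finR, of Y] cw Imp finR by (simp_all add: cwt_def)
    then have "supp_fuel n C' (Atom ` Th \<union> {X}) \<longleftrightarrow>
          inconsistent C' \<or> (\<exists>p\<in>Th. v p) \<or> holds v X"
      and "supp_fuel n C' (Atom ` Th \<union> insert Y R) \<longleftrightarrow>
          inconsistent C' \<or> (\<exists>p\<in>Th. v p) \<or> holds v Y \<or> (\<exists>B\<in>R. holds v B)"
      if "base C'" "C \<subseteq> C'" "finite Th" for C' Th
      using IH[of "Atom ` Th \<union> {X}" C'] IH[of "Atom ` Th \<union> insert Y R" C'] that finR
      by (simp_all add: bex_Un disj_ac)
    then have "supp_fuel (Suc n) C G \<longleftrightarrow>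
        inconsistent C \<or> \<not> holds v X \<or> holds v Y \<or> (\<exists>B\<in>R. holds v B)"
      unfolding unfold Imp form.case by (rule forall_extensions_imp_iff[OF base])
    then show ?thesis using G Imp by auto
  qed
qed

lemma supp_fuel_extension_iff:
  "cwt G < n \<Longrightarrow> finite G \<Longrightarrow> base C \<Longrightarrow> val_base v \<subseteq> C \<Longrightarrow>
   supp_fuel n C G \<longleftrightarrow> inconsistent C \<or> (\<exists>A\<in>G. holds v A)"
proof (induction n arbitrary: G C)
  case 0
  then show ?case by simp
next
  case (Suc n)
  show ?case
  proof (cases "\<forall>A\<in>G. is_atom A")
    case True
    define S where "S = Atom -` G"
    have G: "G = Atom ` S" using True unfolding S_def by (auto dest!: is_atomD)
    have "finite S" using finite_vimageI[OF Suc.prems(2), of Atom] unfolding S_def by (simp add: inj_def)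
    then show ?thesis
      using supp_fuel_Suc_atoms derivable_atoms_iff[OF _ Suc.prems(4)] unfolding G by simp
  next
    case False
    show ?thesis
    proof (rule supp_fuel_Suc_compound_iff[OF _ Suc.prems(1-3) False])
      show "supp_fuel n C' H \<longleftrightarrow> inconsistent C' \<or> (\<exists>A\<in>H. holds v A)"
        if "cwt H < n" "finite H" "base C'" "C \<subseteq> C'" for H C'
        using Suc.IH that Suc.prems(4) by blast
    qed
  qed
qed

lemma supp_extension_iff:
  "finite G \<Longrightarrow> base C \<Longrightarrow> val_base v \<subseteq> C \<Longrightarrow>
   supp C G \<longleftrightarrow> inconsistent C \<or> (\<exists>A\<in>G. holds v A)"
  unfolding supp_def by (rule supp_fuel_extension_iff) simp_all

lemma supp_val_base_iff: "finite G \<Longrightarrow> supp (val_base v) G \<longleftrightarrow> (\<exists>A\<in>G. holds v A)"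
  using supp_extension_iff[OF _ base_val_base order_refl] consistent_val_base by simp

lemma infer_val_base_holds:
  assumes "finite D" "infer (val_base v) G D" "\<forall>A\<in>G. holds v A"
  shows "\<exists>B\<in>D. holds v B"
proof -
  have "supp (val_base v) (Atom ` (\<Union>A\<in>G. {}) \<union> D)"
  proof (cases "G = {}")
    case True
    then show ?thesis using assms(2) unfolding infer_def by simp
  next
    case False
    then have extensions: "\<forall>C Th. base C \<longrightarrow> val_base v \<subseteq> C \<longrightarrow>
        (\<forall>A\<in>G. finite (Th A) \<and> supp C (Atom ` Th A \<union> {A})) \<longrightarrow>
        supp C (Atom ` (\<Union>A\<in>G. Th A) \<union> D)"
      using assms(2) unfolding infer_def by simp
    have "\<forall>A\<in>G. finite {} \<and> supp (val_base v) (Atom ` {} \<union> {A})"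
      using assms(3) supp_val_base_iff[of "{_}" v] by simp
    then show ?thesis using extensions[rule_format, of "val_base v" "\<lambda>_. {}"] base_val_base by simp
  qed
  then show ?thesis using supp_val_base_iff[OF assms(1)] by simp
qed

lemma cf_valid_classically_valid: "finite D \<Longrightarrow> cf_valid G D \<Longrightarrow> classically_valid G D"
  unfolding cf_valid_def classically_valid_def
  using infer_val_base_holds base_val_base HS_subset_val_base by blast

theorem theorem4:
  fixes G D :: "form set"
  assumes "finite G" and "finite D" and "cf_valid G D"
  shows "CLp G D"
  using assms CLp_complete cf_valid_classically_valid by blast

end
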